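(* Let $\theta\in[0,1)$, let $\psi_1,\psi_2:\mathbb{N}\to(0,\infty)$ with $\psi_2\le\psi_1$, $\psi_2$ decreasing, and $\lambda(\psi_2)=\tau_2\ge 2$. Fix $\epsilon\in(0,1)$. For $M>1$ set $c_M=M^{-\epsilon/100}$, and for primes $q$ with $M\le q<2M$ and integers $0\le r<q$ put \[x_{q,r}=\frac{r-\theta}{q}+\psi_1(q)-\tfrac{c_M}{2}\psi_2(q),\qquad \phi_{r,q}(x)=(c_M\psi_2(q))^{-1}\,\phi\big((c_M\psi_2(q))^{-1}(x-x_{q,r})\big),\] where $\phi$ is a fixed nonnegative, not identically zero, smooth function on $\mathbb{R}$ supported in $[-1/2,1/2]$ with $|\hat\phi(\xi)|\le C\exp(-|\xi|^{3/4})$ for all sufficiently large $|\xi|$. Let $g_M=\sum_{M\le q<2M,\ q\text{ prime}}\sum_{0\le r<q}\phi_{r,q}$ and $f_M=g_M/\hat g_M(0)$. Then there exist $M_0=M_0(\epsilon,\psi_1,\psi_2,\theta,\phi)$ and $C_\epsilon$ such that for all $M\ge M_0$ and all integers $s$: \begin{align*} \hat f_M(0)&=1,\\ \hat f_M(s)&=0 &&\text{if }1\le|s|<M,\\ |\hat f_M(s)|&\le C_\epsilon M^{-1+\epsilon} &&\text{if }M\le|s|\le M^{\tau_2(1+\epsilon/2)},\\ |\hat f_M(s)|&\le\exp\Big(-\Big|\frac{s}{M^{\tau_2}}\Big|^{1/2}\Big) &&\text{if }|s|\ge M^{\tau_2(1+\epsilon/2)}. \end{align*}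
   Context: $\lambda(\psi):=-\lim_{q\to\infty}\frac{\log\psi(q)}{\log q}$ (assumed to exist). Fourier transform on $\mathbb{R}$: $\hat f(\xi)=\int e^{-2\pi i x\xi}f(x)\,dx$. *)

theory Defs
  imports "HOL-Analysis.Analysis"
begin

definition fourier :: "(real \<Rightarrow> complex) \<Rightarrow> real \<Rightarrow> complex" where
  "fourier f \<xi> = (\<integral>x. exp (- (2 * pi * \<i> * complex_of_real (x * \<xi>))) * f x \<partial>lborel)"

definition smooth_fun :: "(real \<Rightarrow> real) \<Rightarrow> bool" where
  "smooth_fun f \<longleftrightarrow> (\<forall>k x. ((deriv ^^ k) f) differentiable (at x))"

definition cM :: "real \<Rightarrow> real \<Rightarrow> real" where
  "cM \<epsilon> M = M powr (- \<epsilon> / 100)"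

definition xqr :: "real \<Rightarrow> (nat \<Rightarrow> real) \<Rightarrow> (nat \<Rightarrow> real) \<Rightarrow> real \<Rightarrow> real \<Rightarrow> nat \<Rightarrow> nat \<Rightarrow> real" where
  "xqr \<theta> \<psi>1 \<psi>2 \<epsilon> M q r =
     (real r - \<theta>) / real q + \<psi>1 q - cM \<epsilon> M / 2 * \<psi>2 q"

definition phi_rq :: "(real \<Rightarrow> real) \<Rightarrow> real \<Rightarrow> (nat \<Rightarrow> real) \<Rightarrow> (nat \<Rightarrow> real) \<Rightarrow> real \<Rightarrow> real
    \<Rightarrow> nat \<Rightarrow> nat \<Rightarrow> real \<Rightarrow> real" where
  "phi_rq \<phi> \<theta> \<psi>1 \<psi>2 \<epsilon> M r q x =
     (cM \<epsilon> M * \<psi>2 q) powr (-1) *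
       \<phi> ((cM \<epsilon> M * \<psi>2 q) powr (-1) * (x - xqr \<theta> \<psi>1 \<psi>2 \<epsilon> M q r))"

definition gM :: "(real \<Rightarrow> real) \<Rightarrow> real \<Rightarrow> (nat \<Rightarrow> real) \<Rightarrow> (nat \<Rightarrow> real) \<Rightarrow> real \<Rightarrow> real
    \<Rightarrow> real \<Rightarrow> real" where
  "gM \<phi> \<theta> \<psi>1 \<psi>2 \<epsilon> M x =
     (\<Sum>q\<in>{q::nat. prime q \<and> M \<le> real q \<and> real q < 2 * M}.
        \<Sum>r<q. phi_rq \<phi> \<theta> \<psi>1 \<psi>2 \<epsilon> M r q x)"

definition fM :: "(real \<Rightarrow> real) \<Rightarrow> real \<Rightarrow> (nat \<Rightarrow> real) \<Rightarrow> (nat \<Rightarrow> real) \<Rightarrow> real \<Rightarrow> real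
    \<Rightarrow> real \<Rightarrow> complex" where
  "fM \<phi> \<theta> \<psi>1 \<psi>2 \<epsilon> M x =
     complex_of_real (gM \<phi> \<theta> \<psi>1 \<psi>2 \<epsilon> M x)
       / fourier (\<lambda>y. complex_of_real (gM \<phi> \<theta> \<psi>1 \<psi>2 \<epsilon> M y)) 0"

end

theory Submission
  imports Defs "HOL-Real_Asymp.Real_Asymp"
begin

text \<open>
  Summed over r, the bumps phi_rq contribute to the Fourier coefficient of g_M at an integer s the
  factor sum_(r<q) exp(-2 pi i r s / q) (up to a unimodular factor), which vanishes unless q divides
  s and has modulus at most q otherwise. Hence |hat f_M(s)| is at most the sum over primes q | s of
  q |hat phi(c_M psi_2(q) s)|, divided by the sum of all q times the integral of phi. For
  0 < |s| < M no prime q >= M divides s. For M <= |s| <= M^(tau_2 (1 + eps/2)) at most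
  tau_2 (1 + eps/2) primes from [M, 2M) divide s, whereas Chebyshev's argument with the central
  binomial coefficient gives at least M / (4 log 4M) primes there. For larger |s| the frequency
  c_M psi_2(q) s exceeds |s / M^tau_2|^(49/50) up to a constant, and the stretched exponential decay
  of hat phi beats exp(-|s / M^tau_2|^(1/2)).
\<close>

section \<open>Chebyshev's lower bound for primes in dyadic intervals\<close>

lemma prod_primes_dvd_nat:
  fixes n :: nat
  assumes "finite S" "n \<noteq> 0" "\<And>p. p \<in> S \<Longrightarrow> prime p \<and> p dvd n"
  shows "\<Prod>S dvd n"
proof -
  have "S \<subseteq> prime_factors n" using assms by (auto simp: in_prime_factors_iff)
  then have "\<Prod>S dvd (\<Prod>p\<in>prime_factors n. p)" by (intro prod_dvd_prod_subset) auto
  also have "\<dots> dvd (\<Prod>p\<in>prime_factors n. p ^ multiplicity p n)"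
    by (intro prod_dvd_prod dvd_power) (auto simp: prime_factors_multiplicity)
  also have "\<dots> = n" using assms(2) by (simp add: prime_factorization_nat[symmetric])
  finally show ?thesis .
qed

lemma sum_prime_powers_dvd_eq_multiplicity:
  fixes p x K :: nat
  assumes "prime p" "0 < x" "x < p ^ K"
  shows "(\<Sum>i\<in>{1..K}. if p ^ i dvd x then 1 else 0::nat) = multiplicity p x"
proof -
  let ?v = "multiplicity p x"
  have "p ^ ?v \<le> x" using assms(2) multiplicity_dvd dvd_imp_le by blast
  then have "p ^ ?v < p ^ K" using assms(3) by linarith
  then have "?v < K" using power_less_imp_less_exp prime_gt_1_nat[OF assms(1)] by blast
  have "\<not> is_unit p" using assms(1) by (auto simp: not_prime_unit)
  then have dvd_iff: "p ^ i dvd x \<longleftrightarrow> i \<le> ?v" for i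
    using assms(2) power_dvd_iff_le_multiplicity[of x p i] by simp
  have "{i\<in>{1..K}. p ^ i dvd x} = {1..?v}" using \<open>?v < K\<close> by (auto simp only: dvd_iff) auto
  moreover have "(\<Sum>i\<in>{1..K}. if p ^ i dvd x then 1 else 0::nat) = card {i\<in>{1..K}. p ^ i dvd x}"
    by (simp add: sum.If_cases) (intro arg_cong[where f=card], auto)
  ultimately show ?thesis by simp
qed

lemma multiplicity_fact_eq_sum_div:
  fixes p K :: nat
  assumes "prime p"
  shows "m < p ^ K \<Longrightarrow> multiplicity p (fact m :: nat) = (\<Sum>i\<in>{1..K}. m div p ^ i)"
proof (induction m)
  case (Suc m)
  have "multiplicity p (fact (Suc m) :: nat) = multiplicity p (Suc m * fact m :: nat)" by simp
  also have "\<dots> = multiplicity p (Suc m) + multiplicity p (fact m :: nat)"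
    using assms by (intro prime_elem_multiplicity_mult_distrib) auto
  also have "multiplicity p (Suc m) = (\<Sum>i\<in>{1..K}. if p ^ i dvd Suc m then 1 else 0::nat)"
    using sum_prime_powers_dvd_eq_multiplicity[OF assms, of "Suc m" K] Suc.prems by simp
  also have "multiplicity p (fact m :: nat) = (\<Sum>i\<in>{1..K}. m div p ^ i)" using Suc by simp
  also have "(\<Sum>i\<in>{1..K}. if p ^ i dvd Suc m then 1 else 0::nat) + \<dots> = (\<Sum>i\<in>{1..K}. Suc m div p ^ i)"
    by (simp only: sum.distrib[symmetric]) (intro sum.cong refl, simp add: div_Suc dvd_eq_mod_eq_0)
  finally show ?case .
qed simp

lemma double_div_bounds:
  fixes n d :: nat
  shows "2 * (n div d) \<le> (2 * n) div d" and "(2 * n) div d \<le> 2 * (n div d) + 1"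
proof -
  have "(2 * n) div d = 2 * (n div d) + (2 * (n mod d)) div d"
    by (rule div_mult1_eq)
  moreover have "(2 * (n mod d)) div d \<le> 1"
  proof (cases "d = 0")
    case False
    then have "2 * (n mod d) < 2 * d" by simp
    then show ?thesis using less_mult_imp_div_less[of "2 * (n mod d)" 2 d] by (simp add: mult.commute)
  qed simp
  ultimately show "2 * (n div d) \<le> (2 * n) div d" "(2 * n) div d \<le> 2 * (n div d) + 1"
    by simp_all
qed

lemma choose_odd_middle_le: "(2*k+1) choose k \<le> 4 ^ k"
proof -
  have "((2*k+1) choose k) + ((2*k+1) choose Suc k) = (\<Sum>i\<in>{k, Suc k}. (2*k+1) choose i)"
    by simp
  also have "\<dots> \<le> (\<Sum>i\<le>2*k+1. (2*k+1) choose i)" by (intro sum_mono2) auto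
  also have "\<dots> = 2 ^ (2*k+1)" by (rule choose_row_sum)
  also have "\<dots> = 2 * 4 ^ k" by (simp add: power_mult)
  finally show ?thesis using binomial_symmetric[of "Suc k" "2*k+1"] by simp
qed

lemma prod_primes_above_half_dvd_choose:
  "\<Prod>{p::nat. prime p \<and> k+1 < p \<and> p \<le> 2*k+1} dvd (2*k+1) choose k"
proof (rule prod_primes_dvd_nat)
  fix p assume "p \<in> {p::nat. prime p \<and> k+1 < p \<and> p \<le> 2*k+1}"
  then have p: "prime p" "k+1 < p" "p \<le> 2*k+1" by auto
  have "fact k * fact (k+1) * ((2*k+1) choose k) = (fact (2*k+1) :: nat)"
    using binomial_fact_lemma[of k "2*k+1"] by (simp add: Suc_diff_le mult_2)
  moreover have "p dvd (fact (2*k+1) :: nat)" "\<not> p dvd (fact k :: nat)" "\<not> p dvd (fact (k+1) :: nat)"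
    using p by (subst prime_dvd_fact_iff[OF p(1)], linarith)+
  ultimately show "prime p \<and> p dvd (2*k+1) choose k"
    using p by (metis prime_dvd_mult_iff)
qed auto

lemma primorial_le_power4: "\<Prod>{p::nat. prime p \<and> p \<le> x} \<le> 4 ^ x"
proof (induction x rule: less_induct)
  case (less x)
  consider "x \<le> 2" | "x > 2" "even x" | k where "x = 2*k+1" "k \<ge> 1"
    by (cases "x \<le> 2"; cases "even x") (auto elim: oddE)
  then show ?case
  proof cases
    case 1
    then have "{p::nat. prime p \<and> p \<le> x} = (if x = 2 then {2} else {})"
      by (auto dest: prime_ge_2_nat)
    then show ?thesis by simp
  next
    case 2
    then have "\<not> prime x" using prime_odd_nat by blast
    then have "prime p \<and> p \<le> x \<longleftrightarrow> prime p \<and> p \<le> x - 1" for p by (cases "p = x") auto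
    then have "{p::nat. prime p \<and> p \<le> x} = {p. prime p \<and> p \<le> x - 1}" by blast
    then have "\<Prod>{p::nat. prime p \<and> p \<le> x} \<le> 4 ^ (x - 1)" using less[of "x - 1"] 2 by simp
    also have "\<dots> \<le> 4 ^ x" by (intro power_increasing) auto
    finally show ?thesis .
  next
    case 3
    define T where "T = {p::nat. prime p \<and> k+1 < p \<and> p \<le> 2*k+1}"
    have "{p::nat. prime p \<and> p \<le> x} = {p::nat. prime p \<and> p \<le> k+1} \<union> T"
      unfolding T_def 3 by auto
    then have "\<Prod>{p::nat. prime p \<and> p \<le> x} = \<Prod>{p::nat. prime p \<and> p \<le> k+1} * \<Prod>T"
      by (simp only:) (rule prod.union_disjoint, auto simp: T_def)
    also have "\<Prod>T \<le> 4 ^ k"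
      using dvd_imp_le[OF prod_primes_above_half_dvd_choose[of k]] choose_odd_middle_le[of k]
      unfolding T_def by (simp add: zero_less_binomial_iff)
    then have "\<Prod>{p::nat. prime p \<and> p \<le> k+1} * \<Prod>T \<le> 4 ^ (k+1) * 4 ^ k"
      using less[of "k+1"] 3 by (intro mult_mono) auto
    also have "\<dots> = 4 ^ x" unfolding 3 by (simp add: power_add[symmetric])
    finally show ?thesis .
  qed
qed

lemma multiplicity_central_binomial:
  fixes p n K :: nat
  assumes p: "prime p" and K: "2*n < p^K"
  shows "multiplicity p ((2*n) choose n) = (\<Sum>i\<in>{1..K}. (2*n) div p^i - 2*(n div p^i))"
proof -
  let ?B = "(2*n) choose n"
  have "multiplicity p (fact (2*n) :: nat) = multiplicity p (fact n * fact n * ?B :: nat)"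
    using binomial_fact_lemma[of n "2*n"] by simp
  also have "\<dots> = 2 * multiplicity p (fact n :: nat) + multiplicity p ?B"
    using p by (simp add: prime_elem_multiplicity_mult_distrib)
  finally have "multiplicity p ?B = (\<Sum>i\<in>{1..K}. (2*n) div p ^ i) - (\<Sum>i\<in>{1..K}. 2 * (n div p ^ i))"
    using multiplicity_fact_eq_sum_div[OF p, of "2*n" K] multiplicity_fact_eq_sum_div[OF p, of n K] K
    by (simp add: sum_distrib_left)
  also have "\<dots> = (\<Sum>i\<in>{1..K}. (2*n) div p^i - 2*(n div p^i))"
    by (rule sum_subtractf_nat[symmetric]) (rule double_div_bounds(1))
  finally show ?thesis .
qed

lemma prime_power_multiplicity_central_binomial_le:
  fixes p n :: nat
  assumes p: "prime p" and n: "n > 0"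
  shows "p ^ multiplicity p ((2*n) choose n) \<le> 2*n"
proof -
  define v where "v = multiplicity p ((2*n) choose n)"
  define t where "t i = (2*n) div p^i - 2*(n div p^i)" for i
  have False if big: "2*n < p ^ v"
  proof -
    have "v \<noteq> 0" using big n by (intro notI) simp
    have "v = (\<Sum>i\<in>{1..v}. t i)"
      unfolding t_def by (rule multiplicity_central_binomial[OF p big, folded v_def])
    also have "{1..v} = insert v {1..<v}" using \<open>v \<noteq> 0\<close> by auto
    also have "(\<Sum>i\<in>insert v {1..<v}. t i) = (\<Sum>i\<in>{1..<v}. t i)" using big by (simp add: t_def)
    also have "\<dots> \<le> (\<Sum>i\<in>{1..<v}. 1)"
      using double_div_bounds(2) by (intro sum_mono) (simp add: t_def le_diff_conv)
    finally show False using \<open>v \<noteq> 0\<close> by simp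
  qed
  then show ?thesis unfolding v_def by (meson not_le)
qed

lemma multiplicity_central_binomial_eq_0:
  fixes p n :: nat
  assumes p: "prime p" and "p \<le> n" "2*n < 3*p" "2*n < p*p"
  shows "multiplicity p ((2*n) choose n) = 0"
proof -
  have K: "2*n < p^2" using assms by (simp add: power2_eq_square)
  have "(2*n) div p = 2" "n div p = 1" using assms by (intro div_nat_eqI; simp)+
  then show ?thesis
    using multiplicity_central_binomial[OF p K] K by (simp add: numeral_2_eq_2)
qed

lemma card_primes_square_le: "real (card {p::nat. prime p \<and> p * p \<le> m}) \<le> sqrt (real m)"
proof -
  define r where "r = nat \<lfloor>sqrt (real m)\<rfloor>"
  have "p \<le> r" if "p * p \<le> m" for p
  proof -
    have "real p = sqrt (real (p * p))" by simp
    also have "\<dots> \<le> sqrt (real m)" using that by (intro real_sqrt_le_mono) (simp only: of_nat_le_iff)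
    finally show ?thesis unfolding r_def by (simp add: le_nat_floor)
  qed
  then have "{p::nat. prime p \<and> p * p \<le> m} \<subseteq> {1..r}" by (auto dest: prime_ge_1_nat)
  then have "card {p::nat. prime p \<and> p * p \<le> m} \<le> r" using card_mono[of "{1..r}"] by fastforce
  then have "real (card {p::nat. prime p \<and> p * p \<le> m}) \<le> real r" by (simp only: of_nat_le_iff)
  also have "real r \<le> sqrt (real m)" unfolding r_def by simp
  finally show ?thesis .
qed

lemma sum_ln_primes_le: "(\<Sum>p | prime p \<and> p \<le> x. ln (real p)) \<le> real x * ln 4"
proof -
  have "(\<Sum>p | prime p \<and> p \<le> x. ln (real p)) = ln (real (\<Prod>{p::nat. prime p \<and> p \<le> x}))"
    by (subst ln_prod[symmetric]) (auto simp: prime_gt_0_nat)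
  also have "\<dots> \<le> ln (4 ^ x)"
  proof (rule ln_mono)
    show "real (\<Prod>{p::nat. prime p \<and> p \<le> x}) \<le> 4 ^ x"
      using primorial_le_power4[of x] by (metis of_nat_le_iff of_nat_numeral of_nat_power)
  qed (auto simp: prime_gt_0_nat intro!: prod_pos)
  also have "\<dots> = real x * ln 4" by (simp add: ln_realpow)
  finally show ?thesis .
qed

lemma ln_prime_power_central_binomial_le:
  fixes p n :: nat
  assumes p: "prime p" and n: "n > 0"
  shows "ln (real (p ^ multiplicity p ((2*n) choose n))) \<le>
           (if p * p \<le> 2*n then ln (2 * real n) else 0) + (if p \<le> (2*n) div 3 then ln (real p) else 0)
         + (if n < p \<and> p \<le> 2*n then ln (2 * real n) else 0)"
    (is "?L \<le> ?h")
proof -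
  define v where "v = multiplicity p ((2*n) choose n)"
  have p1: "real p \<ge> 1" using prime_ge_1_nat[OF p] by simp
  have pv: "p ^ v \<le> 2*n" unfolding v_def by (rule prime_power_multiplicity_central_binomial_le[OF p n])
  then have "real (p ^ v) \<le> 2 * real n" by (metis of_nat_le_iff of_nat_mult of_nat_numeral)
  then have L_2n: "?L \<le> ln (2 * real n)" unfolding v_def[symmetric] using p1 by (intro ln_mono) auto
  have ln_nonneg: "0 \<le> ln (real p)" "0 \<le> ln (2 * real n)" using n p1 by simp_all
  then have h_nonneg: "0 \<le> ?h" by simp
  show ?thesis
  proof (cases "v = 0")
    case True
    then show ?thesis using h_nonneg unfolding v_def by simp
  next
    case False
    then have "p \<le> 2*n" using pv le_trans[OF self_le_power[of p v]] prime_ge_1_nat[OF p] by auto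
    consider "p * p \<le> 2*n \<or> n < p" | "2*n < p * p" "p \<le> n" "2*n < 3*p" | "2*n < p * p" "3*p \<le> 2*n"
      by linarith
    then show ?thesis
    proof cases
      case 1
      then show ?thesis using L_2n \<open>p \<le> 2*n\<close> ln_nonneg by auto
    next
      case 2
      then show ?thesis using multiplicity_central_binomial_eq_0[OF p] False unfolding v_def by simp
    next
      case 3
      have "p ^ v < p ^ 2" using pv 3 by (simp add: power2_eq_square)
      then have "v \<le> 1" using power_less_imp_less_exp prime_gt_1_nat[OF p] by fastforce
      then have "?L \<le> ln (real p)"
        unfolding v_def[symmetric] using p1 by (cases v) auto
      moreover have "p \<le> (2*n) div 3" using 3 by linarith
      moreover have "\<not> p * p \<le> 2*n" using 3 by simp
      ultimately show ?thesis using ln_nonneg by auto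
    qed
  qed
qed

lemma ln_central_binomial_le:
  fixes n :: nat
  assumes n: "n > 0"
  shows "ln (real ((2*n) choose n)) \<le> sqrt (2 * real n) * ln (2 * real n) + real ((2*n) div 3) * ln 4
           + real (card {p. prime p \<and> n < p \<and> p \<le> 2*n}) * ln (2 * real n)"
proof -
  define B where "B = (2*n) choose n"
  define PF where "PF = prime_factors B"
  have B0: "B > 0" unfolding B_def by simp
  have sum_PF_le: "(\<Sum>p\<in>PF. if P p then f p else 0) \<le> (\<Sum>p | prime p \<and> P p. f p)"
    if "finite {p. prime p \<and> P p}" "\<And>p. prime p \<Longrightarrow> f p \<ge> 0"
    for P :: "nat \<Rightarrow> bool" and f :: "nat \<Rightarrow> real"
  proof -
    have "(\<Sum>p\<in>PF. if P p then f p else 0) = (\<Sum>p\<in>PF \<inter> {p. P p}. f p)"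
      by (simp add: sum.inter_restrict PF_def)
    also have "\<dots> \<le> (\<Sum>p | prime p \<and> P p. f p)"
      using that by (intro sum_mono2) (auto simp: PF_def in_prime_factors_iff)
    finally show ?thesis .
  qed
  have "real B = (\<Prod>p\<in>PF. real (p ^ multiplicity p B))"
    unfolding PF_def by (subst prime_factorization_nat[OF B0]) (simp only: of_nat_prod)
  then have "ln (real B) = (\<Sum>p\<in>PF. ln (real (p ^ multiplicity p B)))"
    by (simp only:) (rule ln_prod, simp add: PF_def, simp add: PF_def in_prime_factors_iff prime_gt_0_nat)
  also have "\<dots> \<le> (\<Sum>p\<in>PF. (if p * p \<le> 2*n then ln (2 * real n) else 0))
      + (\<Sum>p\<in>PF. if p \<le> (2*n) div 3 then ln (real p) else 0)
      + (\<Sum>p\<in>PF. if n < p \<and> p \<le> 2*n then ln (2 * real n) else 0)"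
    unfolding sum.distrib[symmetric] B_def
    by (intro sum_mono ln_prime_power_central_binomial_le n) (auto simp: PF_def B_def in_prime_factors_iff)
  also have "\<dots> \<le> (\<Sum>p | prime p \<and> p * p \<le> 2*n. ln (2 * real n))
      + (\<Sum>p | prime p \<and> p \<le> (2*n) div 3. ln (real p))
      + (\<Sum>p | prime p \<and> n < p \<and> p \<le> 2*n. ln (2 * real n))"
  proof (intro add_mono sum_PF_le)
    show "finite {p. prime p \<and> p * p \<le> 2*n}"
      by (rule finite_subset[of _ "{..2*n}"]) (auto intro: le_trans[OF le_square])
  qed (use n prime_ge_1_nat in \<open>auto\<close>)
  also have "\<dots> \<le> sqrt (2 * real n) * ln (2 * real n) + real ((2*n) div 3) * ln 4
           + real (card {p. prime p \<and> n < p \<and> p \<le> 2*n}) * ln (2 * real n)"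
    using card_primes_square_le[of "2*n"] sum_ln_primes_le[of "(2*n) div 3"] n
    by (intro add_mono) (auto intro: mult_right_mono)
  finally show ?thesis unfolding B_def .
qed

lemma eventually_card_primes_between_ge:
  "eventually (\<lambda>n. real n / (4 * ln (2 * real n)) + 2 \<le> real (card {p. prime p \<and> n < p \<and> p \<le> 2*n}))
     sequentially"
proof -
  have "eventually (\<lambda>n::nat. real n / (4 * ln (2 * real n)) + 3 + sqrt (2 * real n)
                            \<le> real n / (3 * ln (2 * real n))) sequentially"
    by real_asymp
  moreover have "eventually (\<lambda>n::nat. n > 0) sequentially" by (rule eventually_gt_at_top)
  ultimately show ?thesis
  proof eventually_elim
    case (elim n)
    define K where "K = real (card {p. prime p \<and> n < p \<and> p \<le> 2*n})"
    have l0: "ln (2 * real n) > 0" using elim by simp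
    have "ln (4 ^ n / (2 * real n)) \<le> ln (real ((2*n) choose n))"
      using central_binomial_lower_bound[of n] elim by (intro ln_mono) auto
    also have "ln (4 ^ n / (2 * real n)) = real n * ln 4 - ln (2 * real n)"
      using elim by (simp add: ln_div ln_realpow)
    finally have "real n * ln 4 - ln (2 * real n)
        \<le> sqrt (2 * real n) * ln (2 * real n) + real ((2*n) div 3) * ln 4 + K * ln (2 * real n)"
      using ln_central_binomial_le[OF elim(2)] unfolding K_def by linarith
    moreover have "real ((2*n) div 3) * ln 4 \<le> 2 * real n / 3 * ln 4"
      by (intro mult_right_mono) (simp_all add: real_of_nat_div)
    moreover have "real n / 3 \<le> real n / 3 * ln 4"
    proof -
      have "1 \<le> ln (4::real)" using exp_le by (subst ln_ge_iff) auto
      then show ?thesis by (simp add: mult_le_cancel_left1)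
    qed
    ultimately have "real n / 3 \<le> (K + 1 + sqrt (2 * real n)) * ln (2 * real n)"
      by (simp only: distrib_right mult_1_left)
    then have "real n / (3 * ln (2 * real n)) \<le> K + 1 + sqrt (2 * real n)"
      using l0 by (simp add: divide_le_eq mult.commute mult.left_commute)
    with elim(1) show ?case unfolding K_def by linarith
  qed
qed

definition dyadic_primes :: "real \<Rightarrow> nat set" where
  "dyadic_primes M = {q. prime q \<and> M \<le> real q \<and> real q < 2 * M}"

lemma finite_dyadic_primes: "finite (dyadic_primes M)"
proof (rule finite_subset)
  show "dyadic_primes M \<subseteq> {..nat \<lceil>2 * M\<rceil>}"
    unfolding dyadic_primes_def by (auto simp: le_nat_iff) linarith
qed simp

lemma eventually_card_dyadic_primes_ge:
  "eventually (\<lambda>M. M / (4 * ln (4 * M)) \<le> real (card (dyadic_primes M))) at_top"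
proof -
  obtain n0 where n0: "\<And>n. n \<ge> n0 \<Longrightarrow>
      real n / (4 * ln (2 * real n)) + 2 \<le> real (card {p. prime p \<and> n < p \<and> p \<le> 2*n})"
    using eventually_card_primes_between_ge by (auto simp: eventually_at_top_linorder)
  have "M / (4 * ln (4 * M)) \<le> real (card (dyadic_primes M))" if M: "M \<ge> real n0" "M \<ge> 1" for M
  proof -
    define n where "n = nat \<lceil>M\<rceil>"
    have nM: "M \<le> real n" "real n < M + 1" "n \<ge> 1" unfolding n_def using M by linarith+
    define T where "T = {p. prime p \<and> n < p \<and> p \<le> 2*n}"
    have "T \<subseteq> dyadic_primes M \<union> {2*n - 1, 2*n}"
      using nM by (auto simp: T_def dyadic_primes_def)
    then have "card T \<le> card (dyadic_primes M \<union> {2*n - 1, 2*n})"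
      by (intro card_mono) (simp_all add: finite_dyadic_primes)
    also have "\<dots> \<le> card (dyadic_primes M) + card {2*n - 1, 2*n}" by (rule card_Un_le)
    also have "card {2*n - 1, 2*n} \<le> 2" by (rule card_insert_le_m1) auto
    finally have card_T: "card T \<le> card (dyadic_primes M) + 2" by simp
    have "M / (4 * ln (4 * M)) \<le> real n / (4 * ln (2 * real n))"
      using nM M by (intro frac_le) auto
    also have "\<dots> \<le> real (card (dyadic_primes M))"
      using n0[of n] nM M card_T unfolding T_def by linarith
    finally show ?thesis .
  qed
  then show ?thesis
    unfolding eventually_at_top_linorder by (intro exI[of _ "max (real n0) 1"]) auto
qed

section \<open>The Fourier transform on the real line\<close>

definition fourier_kernel :: "real \<Rightarrow> complex" where
  "fourier_kernel t = exp (- (2 * pi * \<i> * complex_of_real t))"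

lemma fourier_eq_integral_kernel: "fourier f \<xi> = (\<integral>x. fourier_kernel (x * \<xi>) * f x \<partial>lborel)"
  unfolding fourier_def fourier_kernel_def ..

lemma norm_fourier_kernel [simp]: "norm (fourier_kernel t) = 1"
  by (simp add: fourier_kernel_def norm_exp_eq_Re)

lemma fourier_kernel_add: "fourier_kernel (s + t) = fourier_kernel s * fourier_kernel t"
  by (simp add: fourier_kernel_def algebra_simps exp_add[symmetric])

lemma fourier_kernel_of_nat_mult: "fourier_kernel (real r * t) = fourier_kernel t ^ r"
  by (simp add: fourier_kernel_def exp_of_nat_mult[symmetric] algebra_simps)

lemma fourier_kernel_eq_1_iff: "fourier_kernel t = 1 \<longleftrightarrow> t \<in> \<int>"
proof
  assume "fourier_kernel t = 1"
  then obtain n :: int where "- (2 * pi * t) = of_int (2 * n) * pi"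
    unfolding fourier_kernel_def exp_eq_1 by auto
  then have "pi * (t + of_int n) = 0" by (simp add: algebra_simps)
  then have "t = of_int (- n)" by simp
  then show "t \<in> \<int>" by simp
next
  assume "t \<in> \<int>"
  then obtain n where "t = of_int n" by (auto elim: Ints_cases)
  then show "fourier_kernel t = 1"
    using exp_2pi_1_int[of "- n"] by (simp add: fourier_kernel_def algebra_simps)
qed

lemma continuous_on_fourier_kernel: "continuous_on S (\<lambda>x. fourier_kernel (x * \<xi>))"
  unfolding fourier_kernel_def by (intro continuous_intros)

lemma integrable_fourier_integrand:
  fixes f :: "real \<Rightarrow> real"
  assumes "integrable lborel f"
  shows "integrable lborel (\<lambda>x. fourier_kernel (x * \<xi>) * complex_of_real (f x))"
proof (rule Bochner_Integration.integrable_bound)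
  show "integrable lborel f" by (fact assms)
  show "(\<lambda>x. fourier_kernel (x * \<xi>) * complex_of_real (f x)) \<in> borel_measurable lborel"
    using borel_measurable_integrable[OF assms]
    by (intro borel_measurable_times borel_measurable_of_real)
       (simp_all add: borel_measurable_continuous_onI continuous_on_fourier_kernel)
qed (simp add: norm_mult)

lemma fourier_affine:
  fixes f :: "real \<Rightarrow> real"
  assumes a: "a > 0"
  shows "fourier (\<lambda>x. complex_of_real (a powr -1 * f (a powr -1 * (x - x0)))) \<xi> =
         fourier_kernel (x0 * \<xi>) * fourier (\<lambda>x. complex_of_real (f x)) (a * \<xi>)"
proof -
  let ?g = "\<lambda>x. fourier_kernel (x * \<xi>) * complex_of_real (a powr -1 * f (a powr -1 * (x - x0)))"
  have "fourier (\<lambda>x. complex_of_real (a powr -1 * f (a powr -1 * (x - x0)))) \<xi> = integral\<^sup>L lborel ?g"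
    by (rule fourier_eq_integral_kernel)
  also have "\<dots> = \<bar>a\<bar> *\<^sub>R integral\<^sup>L lborel (\<lambda>y. ?g (x0 + a * y))"
    using a by (intro lborel_integral_real_affine) simp
  also have "(\<lambda>y. ?g (x0 + a * y)) = (\<lambda>y. complex_of_real (a powr -1) *
      (fourier_kernel (x0 * \<xi>) * (fourier_kernel (y * (a * \<xi>)) * complex_of_real (f y))))"
  proof
    fix y
    have e: "a powr -1 * (x0 + a * y - x0) = y" using a by (simp add: powr_minus)
    have k: "fourier_kernel ((x0 + a * y) * \<xi>) = fourier_kernel (x0 * \<xi>) * fourier_kernel (y * (a * \<xi>))"
      by (simp only: fourier_kernel_add[symmetric]) (simp add: algebra_simps)
    show "?g (x0 + a * y) = complex_of_real (a powr -1) *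
      (fourier_kernel (x0 * \<xi>) * (fourier_kernel (y * (a * \<xi>)) * complex_of_real (f y)))"
      by (simp only: e k of_real_mult) (simp only: mult_ac)
  qed
  also have "integral\<^sup>L lborel \<dots> = complex_of_real (a powr -1) *
      (fourier_kernel (x0 * \<xi>) * fourier (\<lambda>x. complex_of_real (f x)) (a * \<xi>))"
    unfolding fourier_eq_integral_kernel by simp
  finally show ?thesis using a by (simp add: scaleR_conv_of_real powr_minus)
qed

lemma fourier_sum:
  assumes "\<And>i. i \<in> I \<Longrightarrow> integrable lborel (\<lambda>x. fourier_kernel (x * \<xi>) * f i x)"
  shows "fourier (\<lambda>x. \<Sum>i\<in>I. f i x) \<xi> = (\<Sum>i\<in>I. fourier (f i) \<xi>)"
  unfolding fourier_eq_integral_kernel sum_distrib_left using assms by (rule Bochner_Integration.integral_sum)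

lemma fourier_divide: "fourier (\<lambda>x. f x / c) \<xi> = fourier f \<xi> / c"
  unfolding fourier_eq_integral_kernel times_divide_eq_right by (rule integral_divide_zero)

lemma fourier_of_real_at_0: "fourier (\<lambda>x. complex_of_real (f x)) 0 = complex_of_real (integral\<^sup>L lborel f)"
  by (simp add: fourier_eq_integral_kernel fourier_kernel_def)

lemma norm_fourier_le_integral:
  fixes f :: "real \<Rightarrow> real"
  assumes "\<And>x. f x \<ge> 0"
  shows "norm (fourier (\<lambda>x. complex_of_real (f x)) \<xi>) \<le> integral\<^sup>L lborel f"
proof -
  have "norm (fourier (\<lambda>x. complex_of_real (f x)) \<xi>) \<le>
        integral\<^sup>L lborel (\<lambda>x. norm (fourier_kernel (x * \<xi>) * complex_of_real (f x)))"
    unfolding fourier_eq_integral_kernel by (rule integral_norm_bound)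
  also have "(\<lambda>x. norm (fourier_kernel (x * \<xi>) * complex_of_real (f x))) = f"
    using assms by (simp add: norm_mult)
  finally show ?thesis .
qed

lemma smooth_fun_imp_continuous_on: "smooth_fun f \<Longrightarrow> continuous_on S f"
  unfolding smooth_fun_def
  by (metis funpow_0 continuous_at_imp_continuous_on differentiable_imp_continuous_within)

lemma integrable_lborel_vanishing_outside:
  fixes f :: "real \<Rightarrow> real"
  assumes "continuous_on {a..b} f" and "\<And>x. x \<notin> {a..b} \<Longrightarrow> f x = 0"
  shows "integrable lborel f"
proof -
  have "integrable lborel (\<lambda>x. indicator {a..b} x *\<^sub>R f x)"
    using assms(1) by (rule borel_integrable_compact[OF compact_Icc])
  also have "(\<lambda>x. indicator {a..b} x *\<^sub>R f x) = f"
  proof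
    fix x show "indicator {a..b} x *\<^sub>R f x = f x" using assms(2)[of x] by (cases "x \<in> {a..b}") auto
  qed
  finally show ?thesis .
qed

lemma integral_lborel_pos:
  fixes f :: "real \<Rightarrow> real"
  assumes c: "continuous_on UNIV f" and i: "integrable lborel f" and nn: "\<And>x. f x \<ge> 0"
    and "f x0 \<noteq> 0"
  shows "integral\<^sup>L lborel f > 0"
proof -
  have fx0: "f x0 > 0" using nn[of x0] \<open>f x0 \<noteq> 0\<close> by simp
  have "isCont f x0" using c by (simp add: continuous_on_eq_continuous_at)
  then obtain d where d: "d > 0" "\<And>y. dist y x0 < d \<Longrightarrow> dist (f y) (f x0) < f x0 / 2"
    using fx0 unfolding continuous_at_eps_delta by (metis half_gt_zero)
  define S where "S = {x0 - d/2..x0 + d/2}"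
  have lower: "indicator S x * (f x0 / 2) \<le> f x" for x
  proof (cases "x \<in> S")
    case True
    then have "dist x x0 < d" unfolding S_def dist_real_def using d by auto
    then have "\<bar>f x - f x0\<bar> < f x0 / 2" using d(2)[of x] by (simp add: dist_real_def)
    then show ?thesis using True by (simp only: abs_less_iff) simp
  qed (simp add: nn)
  have "0 < d * (f x0 / 2)" using d fx0 by simp
  also have "\<dots> = integral\<^sup>L lborel (\<lambda>x. indicator S x * (f x0 / 2))"
    unfolding S_def using d by simp
  also have "\<dots> \<le> integral\<^sup>L lborel f"
    using lower i by (intro integral_mono integrable_mult_left)
      (simp_all add: S_def integrable_indicator_iff emeasure_lborel_Icc_eq)
  finally show ?thesis .
qed

lemma sum_fourier_kernel_arith_prog_eq_0:
  fixes s :: int and q :: nat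
  assumes "q > 0" and "\<not> int q dvd s"
  shows "(\<Sum>r<q. fourier_kernel (real r * (real_of_int s / real q) + b)) = 0"
proof -
  define w where "w = fourier_kernel (real_of_int s / real q)"
  have "w ^ q = fourier_kernel (real_of_int s)"
    unfolding w_def fourier_kernel_of_nat_mult[symmetric] using assms(1) by simp
  also have "\<dots> = 1" by (simp add: fourier_kernel_eq_1_iff)
  finally have "w ^ q = 1" .
  moreover have "w \<noteq> 1"
  proof
    assume "w = 1"
    then obtain n where "real_of_int s / real q = of_int n"
      unfolding w_def fourier_kernel_eq_1_iff by (auto elim: Ints_cases)
    then have "real_of_int s = real_of_int (n * int q)" using assms(1) by (simp add: field_simps)
    then have "s = n * int q" by (simp only: of_int_eq_iff)
    then show False using assms(2) by simp
  qed
  ultimately have "(\<Sum>r<q. w ^ r) = 0" by (simp add: sum_gp_strict)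
  moreover have "fourier_kernel (real r * (real_of_int s / real q) + b) = w ^ r * fourier_kernel b" for r
    unfolding w_def by (simp only: fourier_kernel_add fourier_kernel_of_nat_mult)
  ultimately show ?thesis by (simp add: sum_distrib_right[symmetric])
qed

section \<open>The Fourier coefficients of f_M\<close>

lemma integrable_lborel_rescaled:
  fixes f :: "real \<Rightarrow> real"
  assumes "integrable lborel f" "a > 0"
  shows "integrable lborel (\<lambda>x. a powr -1 * f (a powr -1 * (x - x0)))"
proof -
  have "integrable lborel (\<lambda>x. f (- (a powr -1 * x0) + a powr -1 * x))"
    using assms by (intro lborel_integrable_real_affine) simp_all
  then show ?thesis by (simp add: right_diff_distrib)
qed

lemma fourier_gM:
  assumes i: "integrable lborel \<phi>" and a: "\<And>q. cM \<epsilon> M * \<psi>2 q > 0"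
  shows "fourier (\<lambda>y. complex_of_real (gM \<phi> \<theta> \<psi>1 \<psi>2 \<epsilon> M y)) \<xi> =
    (\<Sum>q\<in>dyadic_primes M. (\<Sum>r<q. fourier_kernel (xqr \<theta> \<psi>1 \<psi>2 \<epsilon> M q r * \<xi>)) *
       fourier (\<lambda>x. complex_of_real (\<phi> x)) (cM \<epsilon> M * \<psi>2 q * \<xi>))"
proof -
  have int: "integrable lborel (\<lambda>x. fourier_kernel (x * \<xi>) * complex_of_real (phi_rq \<phi> \<theta> \<psi>1 \<psi>2 \<epsilon> M r q x))"
    for q r
    unfolding phi_rq_def by (intro integrable_fourier_integrand integrable_lborel_rescaled i a)
  have "fourier (\<lambda>y. complex_of_real (gM \<phi> \<theta> \<psi>1 \<psi>2 \<epsilon> M y)) \<xi> =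
    (\<Sum>q\<in>dyadic_primes M. \<Sum>r<q. fourier (\<lambda>x. complex_of_real (phi_rq \<phi> \<theta> \<psi>1 \<psi>2 \<epsilon> M r q x)) \<xi>)"
    unfolding gM_def dyadic_primes_def[symmetric] of_real_sum
    by (subst fourier_sum) (auto simp: sum_distrib_left int intro!: sum.cong fourier_sum)
  also have "\<dots> = (\<Sum>q\<in>dyadic_primes M. \<Sum>r<q. fourier_kernel (xqr \<theta> \<psi>1 \<psi>2 \<epsilon> M q r * \<xi>) *
       fourier (\<lambda>x. complex_of_real (\<phi> x)) (cM \<epsilon> M * \<psi>2 q * \<xi>))"
    unfolding phi_rq_def by (simp only: fourier_affine[OF a])
  finally show ?thesis by (simp only: sum_distrib_right)
qed

lemma fourier_fM:
  "fourier (fM \<phi> \<theta> \<psi>1 \<psi>2 \<epsilon> M) \<xi> =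
     fourier (\<lambda>y. complex_of_real (gM \<phi> \<theta> \<psi>1 \<psi>2 \<epsilon> M y)) \<xi> /
     fourier (\<lambda>y. complex_of_real (gM \<phi> \<theta> \<psi>1 \<psi>2 \<epsilon> M y)) 0"
  unfolding fM_def by (rule fourier_divide)

lemma fourier_gM_at_0:
  assumes "integrable lborel \<phi>" "\<And>q. cM \<epsilon> M * \<psi>2 q > 0"
  shows "fourier (\<lambda>y. complex_of_real (gM \<phi> \<theta> \<psi>1 \<psi>2 \<epsilon> M y)) 0 =
    complex_of_real (real (\<Sum>q\<in>dyadic_primes M. q) * integral\<^sup>L lborel \<phi>)"
  by (simp add: fourier_gM[OF assms] fourier_of_real_at_0 fourier_kernel_def sum_distrib_right)

lemma sum_fourier_kernel_xqr_eq_0: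
  fixes s :: int
  assumes "q > 0" "\<not> int q dvd s"
  shows "(\<Sum>r<q. fourier_kernel (xqr \<theta> \<psi>1 \<psi>2 \<epsilon> M q r * real_of_int s)) = 0"
proof -
  have "xqr \<theta> \<psi>1 \<psi>2 \<epsilon> M q r * real_of_int s = real r * (real_of_int s / real q)
      + (\<psi>1 q - cM \<epsilon> M / 2 * \<psi>2 q - \<theta> / real q) * real_of_int s" for r
    using assms(1) by (simp add: xqr_def field_simps)
  then show ?thesis using sum_fourier_kernel_arith_prog_eq_0[OF assms] by simp
qed

lemma fourier_gM_eq_0:
  fixes s :: int
  assumes "integrable lborel \<phi>" "\<And>q. cM \<epsilon> M * \<psi>2 q > 0"
    and "\<And>q. q \<in> dyadic_primes M \<Longrightarrow> \<not> int q dvd s"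
  shows "fourier (\<lambda>y. complex_of_real (gM \<phi> \<theta> \<psi>1 \<psi>2 \<epsilon> M y)) (real_of_int s) = 0"
  using assms(3) sum_fourier_kernel_xqr_eq_0
  by (simp add: fourier_gM[OF assms(1,2)] dyadic_primes_def prime_gt_0_nat)

lemma norm_fourier_gM_le:
  fixes s :: int
  assumes "integrable lborel \<phi>" "\<And>q. cM \<epsilon> M * \<psi>2 q > 0"
  shows "norm (fourier (\<lambda>y. complex_of_real (gM \<phi> \<theta> \<psi>1 \<psi>2 \<epsilon> M y)) (real_of_int s)) \<le>
    (\<Sum>q | q \<in> dyadic_primes M \<and> int q dvd s.
       real q * norm (fourier (\<lambda>x. complex_of_real (\<phi> x)) (cM \<epsilon> M * \<psi>2 q * real_of_int s)))"
proof -
  let ?S = "\<lambda>q. \<Sum>r<q. fourier_kernel (xqr \<theta> \<psi>1 \<psi>2 \<epsilon> M q r * real_of_int s)"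
  let ?\<Phi> = "\<lambda>q. fourier (\<lambda>x. complex_of_real (\<phi> x)) (cM \<epsilon> M * \<psi>2 q * real_of_int s)"
  have "norm (?S q * ?\<Phi> q) \<le> (if int q dvd s then real q * norm (?\<Phi> q) else 0)"
    if "q \<in> dyadic_primes M" for q
  proof (cases "int q dvd s")
    case True
    have "norm (?S q) \<le> (\<Sum>r<q. norm (fourier_kernel (xqr \<theta> \<psi>1 \<psi>2 \<epsilon> M q r * real_of_int s)))"
      by (rule norm_sum)
    then have "norm (?S q) \<le> real q" by simp
    then show ?thesis using True by (simp add: norm_mult mult_right_mono)
  next
    case False
    then show ?thesis
      using that sum_fourier_kernel_xqr_eq_0 by (simp add: dyadic_primes_def prime_gt_0_nat)
  qed
  then have "norm (\<Sum>q\<in>dyadic_primes M. ?S q * ?\<Phi> q)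
      \<le> (\<Sum>q\<in>dyadic_primes M. if int q dvd s then real q * norm (?\<Phi> q) else 0)"
    by (intro order.trans[OF norm_sum sum_mono])
  also have "\<dots> = (\<Sum>q | q \<in> dyadic_primes M \<and> int q dvd s. real q * norm (?\<Phi> q))"
    by (rule sum.inter_filter[OF finite_dyadic_primes, symmetric])
  finally show ?thesis by (simp only: fourier_gM[OF assms])
qed

lemma card_dyadic_prime_divisors_le:
  fixes s :: int
  assumes M: "M > 1" and s: "s \<noteq> 0" "real_of_int \<bar>s\<bar> \<le> M powr T"
  shows "real (card {q. q \<in> dyadic_primes M \<and> int q dvd s}) \<le> T"
proof -
  define D where "D = {q. q \<in> dyadic_primes M \<and> int q dvd s}"
  have finD: "finite D" unfolding D_def using finite_dyadic_primes by simp
  have "q dvd nat \<bar>s\<bar>" if "q \<in> D" for q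
  proof -
    have "int q dvd int (nat \<bar>s\<bar>)" using that by (simp add: D_def)
    then show ?thesis by (simp only: of_nat_dvd_iff)
  qed
  then have "\<Prod>D dvd nat \<bar>s\<bar>"
    using finD s by (intro prod_primes_dvd_nat) (auto simp: D_def dyadic_primes_def)
  then have "\<Prod>D \<le> nat \<bar>s\<bar>" using s by (intro dvd_imp_le) auto
  then have "real (\<Prod>D) \<le> real (nat \<bar>s\<bar>)" by (simp only: of_nat_le_iff)
  then have "(\<Prod>q\<in>D. real q) \<le> real_of_int \<bar>s\<bar>" by simp
  moreover have "M ^ card D \<le> (\<Prod>q\<in>D. real q)"
    using prod_mono[of D "\<lambda>_. M" real] M by (simp add: D_def dyadic_primes_def)
  ultimately have "M powr real (card D) \<le> M powr T" using M s by (simp add: powr_realpow)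
  then show ?thesis unfolding D_def using M by simp
qed

lemma card_mult_le_sum_dyadic_primes: "real (card (dyadic_primes M)) * M \<le> real (\<Sum>q\<in>dyadic_primes M. q)"
  using sum_mono[of "dyadic_primes M" "\<lambda>_. M" real] by (simp add: dyadic_primes_def)

lemma ln_le_powr_div: "x > 0 \<Longrightarrow> e > 0 \<Longrightarrow> ln x \<le> x powr e / e" for x e :: real
  using ln_le_minus_one[of "x powr e"] by (simp add: ln_powr field_simps)

lemma ln_div_le_powr:
  fixes M \<epsilon> :: real
  assumes "M > 1" "0 < \<epsilon>" "\<epsilon> \<le> 1"
  shows "ln (4 * M) / M \<le> 4 / \<epsilon> * M powr (-1 + \<epsilon>)"
proof -
  have "ln (4 * M) \<le> 4 powr \<epsilon> * M powr \<epsilon> / \<epsilon>"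
    using ln_le_powr_div[of "4 * M" \<epsilon>] assms by (simp add: powr_mult)
  also have "\<dots> \<le> 4 * M powr \<epsilon> / \<epsilon>"
    using powr_mono[of \<epsilon> 1 4] assms by (intro divide_right_mono mult_right_mono) auto
  finally have "ln (4 * M) / M \<le> 4 * M powr \<epsilon> / \<epsilon> / M"
    using assms by (intro divide_right_mono) auto
  also have "\<dots> = 4 / \<epsilon> * (M powr \<epsilon> / M)" by simp
  also have "M powr \<epsilon> / M = M powr (-1 + \<epsilon>)"
    using assms powr_diff[of M \<epsilon> 1] by simp
  finally show ?thesis .
qed

lemma sum_dyadic_primes_pos:
  assumes "dyadic_primes M \<noteq> {}"
  shows "real (\<Sum>q\<in>dyadic_primes M. q) > 0"
proof -
  obtain q where "q \<in> dyadic_primes M" using assms by blast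
  then have "0 < real q" "real q \<le> real (\<Sum>q\<in>dyadic_primes M. q)"
    using finite_dyadic_primes by (auto simp: dyadic_primes_def prime_gt_0_nat member_le_sum)
  then show ?thesis by linarith
qed

lemma norm_fourier_fM_le:
  fixes s :: int
  assumes i: "integrable lborel \<phi>" and a: "\<And>q. cM \<epsilon> M * \<psi>2 q > 0"
    and I: "integral\<^sup>L lborel \<phi> > 0" and P: "dyadic_primes M \<noteq> {}"
  shows "norm (fourier (fM \<phi> \<theta> \<psi>1 \<psi>2 \<epsilon> M) (real_of_int s)) \<le>
    (\<Sum>q | q \<in> dyadic_primes M \<and> int q dvd s.
       real q * norm (fourier (\<lambda>x. complex_of_real (\<phi> x)) (cM \<epsilon> M * \<psi>2 q * real_of_int s)))
    / (real (\<Sum>q\<in>dyadic_primes M. q) * integral\<^sup>L lborel \<phi>)"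
proof -
  have "0 < real (\<Sum>q\<in>dyadic_primes M. q) * integral\<^sup>L lborel \<phi>"
    using sum_dyadic_primes_pos[OF P] I by simp
  then show ?thesis
    unfolding fourier_fM fourier_gM_at_0[OF i a] norm_divide norm_of_real
    by (simp add: divide_right_mono norm_fourier_gM_le[OF i a])
qed

lemma norm_fourier_fM_le_uniform:
  fixes s :: int
  assumes i: "integrable lborel \<phi>" and a: "\<And>q. cM \<epsilon> M * \<psi>2 q > 0"
    and I: "integral\<^sup>L lborel \<phi> > 0" and P: "dyadic_primes M \<noteq> {}" and E: "E \<ge> 0"
    and bound: "\<And>q. q \<in> dyadic_primes M \<Longrightarrow> int q dvd s \<Longrightarrow>
      norm (fourier (\<lambda>x. complex_of_real (\<phi> x)) (cM \<epsilon> M * \<psi>2 q * real_of_int s)) \<le> integral\<^sup>L lborel \<phi> * E"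
  shows "norm (fourier (fM \<phi> \<theta> \<psi>1 \<psi>2 \<epsilon> M) (real_of_int s)) \<le> E"
proof -
  let ?I = "integral\<^sup>L lborel \<phi>" and ?N = "real (\<Sum>q\<in>dyadic_primes M. q)"
  have NI: "0 < ?N * ?I" using sum_dyadic_primes_pos[OF P] I by simp
  have "norm (fourier (fM \<phi> \<theta> \<psi>1 \<psi>2 \<epsilon> M) (real_of_int s)) \<le>
    (\<Sum>q | q \<in> dyadic_primes M \<and> int q dvd s.
       real q * norm (fourier (\<lambda>x. complex_of_real (\<phi> x)) (cM \<epsilon> M * \<psi>2 q * real_of_int s))) / (?N * ?I)"
    by (rule norm_fourier_fM_le[OF i a I P])
  also have "\<dots> \<le> (\<Sum>q | q \<in> dyadic_primes M \<and> int q dvd s. real q * (?I * E)) / (?N * ?I)"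
    using bound NI by (intro divide_right_mono sum_mono mult_left_mono) auto
  also have "\<dots> \<le> (\<Sum>q\<in>dyadic_primes M. real q * (?I * E)) / (?N * ?I)"
    using I E NI by (intro divide_right_mono sum_mono2 finite_dyadic_primes) auto
  also have "\<dots> = E" using NI by (simp add: sum_distrib_right[symmetric] mult.assoc) auto
  finally show ?thesis .
qed

lemma norm_fourier_fM_middle:
  fixes s :: int
  assumes i: "integrable lborel \<phi>" and a: "\<And>q. cM \<epsilon> M * \<psi>2 q > 0"
    and nn: "\<And>x. \<phi> x \<ge> 0" and I: "integral\<^sup>L lborel \<phi> > 0"
    and M: "M > 1" and P: "M / (4 * ln (4 * M)) \<le> real (card (dyadic_primes M))"
    and \<epsilon>: "0 < \<epsilon>" "\<epsilon> \<le> 1" and s: "s \<noteq> 0" "real_of_int \<bar>s\<bar> \<le> M powr T"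
  shows "norm (fourier (fM \<phi> \<theta> \<psi>1 \<psi>2 \<epsilon> M) (real_of_int s)) \<le> 32 * T / \<epsilon> * M powr (-1 + \<epsilon>)"
proof -
  let ?I = "integral\<^sup>L lborel \<phi>" and ?P = "dyadic_primes M"
  let ?D = "{q. q \<in> ?P \<and> int q dvd s}"
  have lnM: "ln (4 * M) > 0" using M by simp
  then have cardP: "real (card ?P) > 0" using P M by (smt (verit) divide_pos_pos)
  then have P0: "?P \<noteq> {}" by auto
  have cardD: "real (card ?D) \<le> T" by (rule card_dyadic_prime_divisors_le[OF M s])
  have "norm (fourier (fM \<phi> \<theta> \<psi>1 \<psi>2 \<epsilon> M) (real_of_int s)) \<le>
    (\<Sum>q\<in>?D. real q * norm (fourier (\<lambda>x. complex_of_real (\<phi> x)) (cM \<epsilon> M * \<psi>2 q * real_of_int s)))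
    / (real (\<Sum>q\<in>?P. q) * ?I)"
    by (rule norm_fourier_fM_le[OF i a I P0])
  also have "\<dots> \<le> (\<Sum>q\<in>?D. 2 * M * ?I) / (real (card ?P) * M * ?I)"
  proof (rule frac_le)
    show "(\<Sum>q\<in>?D. real q * norm (fourier (\<lambda>x. complex_of_real (\<phi> x)) (cM \<epsilon> M * \<psi>2 q * real_of_int s)))
        \<le> (\<Sum>q\<in>?D. 2 * M * ?I)"
      using norm_fourier_le_integral[OF nn] by (intro sum_mono mult_mono) (auto simp: dyadic_primes_def)
    show "real (card ?P) * M * ?I \<le> real (\<Sum>q\<in>?P. q) * ?I"
      using card_mult_le_sum_dyadic_primes I by simp
  qed (use cardP M I in auto)
  also have "\<dots> = 2 * real (card ?D) / real (card ?P)" using M I by simp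
  also have "\<dots> \<le> 2 * T / (M / (4 * ln (4 * M)))"
    using cardD cardP P M lnM by (intro frac_le) auto
  also have "\<dots> = 8 * T * (ln (4 * M) / M)" using M by simp
  also have "\<dots> \<le> 8 * T * (4 / \<epsilon> * M powr (-1 + \<epsilon>))"
    using ln_div_le_powr[OF M \<epsilon>] order.trans[OF of_nat_0_le_iff cardD]
    by (intro mult_left_mono) auto
  finally show ?thesis by simp
qed

lemma eventually_dyadic_primes_lower_bound:
  fixes \<psi> :: "nat \<Rightarrow> real"
  assumes anti: "antimono \<psi>" and pos: "\<And>q. \<psi> q > 0"
    and lim: "((\<lambda>q. ln (\<psi> q) / ln (real q)) \<longlongrightarrow> - \<tau>) at_top" and "\<tau> < \<sigma>" "0 \<le> \<sigma>"
  shows "eventually (\<lambda>M. \<forall>q\<in>dyadic_primes M. 3 powr (- \<sigma>) * M powr (- \<sigma>) \<le> \<psi> q) at_top"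
proof -
  have "eventually (\<lambda>n. - \<sigma> < ln (\<psi> n) / ln (real n)) at_top"
    using lim \<open>\<tau> < \<sigma>\<close> by (intro order_tendstoD(1)) auto
  then obtain N where N: "\<And>n. n \<ge> N \<Longrightarrow> - \<sigma> < ln (\<psi> n) / ln (real n)"
    by (auto simp: eventually_at_top_linorder)
  have "\<forall>q\<in>dyadic_primes M. 3 powr (- \<sigma>) * M powr (- \<sigma>) \<le> \<psi> q" if M: "M \<ge> max (real N) 1" for M
  proof
    fix q assume q: "q \<in> dyadic_primes M"
    define m where "m = nat \<lceil>2 * M\<rceil>"
    have m: "2 * M \<le> real m" "real m \<le> 3 * M" "m \<ge> N" using M unfolding m_def by linarith+
    have lm: "ln (real m) > 0" using m M by simp
    have "q \<le> m" using q m by (auto simp: dyadic_primes_def)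
    have "(- \<sigma>) * ln (real m) < ln (\<psi> m)"
      using N[OF \<open>m \<ge> N\<close>] lm by (simp add: less_divide_eq)
    then have "real m powr (- \<sigma>) < \<psi> m"
      using pos[of m] lm by (simp add: powr_def) (metis exp_less_cancel_iff exp_ln)
    moreover have "(3 * M) powr (- \<sigma>) \<le> real m powr (- \<sigma>)"
      using m M \<open>0 \<le> \<sigma>\<close> by (intro powr_mono2') auto
    moreover have "\<psi> m \<le> \<psi> q" using anti \<open>q \<le> m\<close> by (rule antimonoD)
    ultimately show "3 powr (- \<sigma>) * M powr (- \<sigma>) \<le> \<psi> q"
      using M by (simp add: powr_mult)
  qed
  then show ?thesis unfolding eventually_at_top_linorder by blast
qed

lemma dilated_frequency_lower_bound:
  fixes M K \<psi> \<epsilon> \<tau> :: real and s :: int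
  assumes M: "M > 1" and \<epsilon>: "\<epsilon> > 0" and K: "K > 0"
    and \<psi>: "K * M powr (- (\<tau> + \<epsilon> / 100)) \<le> \<psi>"
    and s: "M powr (\<tau> + \<epsilon>) \<le> real_of_int \<bar>s\<bar>"
  shows "K * \<bar>real_of_int s / M powr \<tau>\<bar> powr (49/50) \<le> \<bar>M powr (- \<epsilon> / 100) * \<psi> * real_of_int s\<bar>"
proof -
  define u where "u = \<bar>real_of_int s / M powr \<tau>\<bar>"
  have s_eq: "\<bar>real_of_int s\<bar> = u * M powr \<tau>" using M by (simp add: u_def abs_divide)
  have "M powr \<epsilon> \<le> u"
    using s M by (simp add: u_def abs_divide powr_add le_divide_eq mult.commute)
  then have u0: "u > 0" using M by (smt (verit) powr_gt_zero)
  txt \<open>The two losses of M powr (- \<epsilon> / 100) are absorbed by u powr (-1/50), as u is at least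
    M powr \<epsilon>.\<close>
  have "u powr (-1/50) \<le> (M powr \<epsilon>) powr (-1/50)"
    using \<open>M powr \<epsilon> \<le> u\<close> M by (intro powr_mono2') auto
  also have "\<dots> = M powr (- \<epsilon> / 100) * M powr (- (\<tau> + \<epsilon> / 100)) * M powr \<tau>"
    by (simp add: powr_powr powr_add[symmetric])
  finally have "K * u * u powr (-1/50)
      \<le> K * u * (M powr (- \<epsilon> / 100) * M powr (- (\<tau> + \<epsilon> / 100)) * M powr \<tau>)"
    using K u0 by (intro mult_left_mono) auto
  also have "\<dots> = M powr (- \<epsilon> / 100) * (K * M powr (- (\<tau> + \<epsilon> / 100))) * \<bar>real_of_int s\<bar>"
    by (simp add: s_eq mult_ac)
  also have "\<dots> \<le> M powr (- \<epsilon> / 100) * \<psi> * \<bar>real_of_int s\<bar>"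
    using \<psi> by (intro mult_right_mono mult_left_mono) auto
  also have "K * u * u powr (-1/50) = K * u powr (49/50)"
    using u0 powr_add[of u 1 "-1/50"] by (simp add: mult.assoc)
  finally show ?thesis
    using \<psi> K M by (simp add: u_def abs_mult) (smt (verit) powr_gt_zero mult_pos_pos)
qed

lemma eventually_stretched_exp_le:
  fixes K I C :: real
  assumes "K > 0" "I > 0"
  shows "eventually (\<lambda>u. C * exp (- ((K * u powr (49/50)) powr (3/4))) \<le> I * exp (- (u powr (1/2)))) at_top"
proof -
  have "eventually (\<lambda>u. max C 1 * exp (- ((K * u powr (49/50)) powr (3/4))) \<le> I * exp (- (u powr (1/2))))
      at_top"
    using assms by real_asymp
  then show ?thesis by eventually_elim (smt (verit) exp_gt_zero max.cobounded1 mult_right_mono)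
qed

lemma norm_fourier_fM_large:
  fixes s :: int
  assumes i: "integrable lborel \<phi>" and a: "\<And>q. cM \<epsilon> M * \<psi>2 q > 0"
    and I: "integral\<^sup>L lborel \<phi> > 0" and P: "dyadic_primes M \<noteq> {}"
    and M: "M > 1" and \<epsilon>: "\<epsilon> > 0" and K: "K > 0"
    and \<psi>: "\<forall>q\<in>dyadic_primes M. K * M powr (- (\<tau> + \<epsilon> / 100)) \<le> \<psi>2 q"
    and decay: "\<And>\<xi>. R \<le> \<bar>\<xi>\<bar> \<Longrightarrow>
      norm (fourier (\<lambda>x. complex_of_real (\<phi> x)) \<xi>) \<le> C * exp (- (\<bar>\<xi>\<bar> powr (3/4)))"
    and U: "\<And>u. M powr \<epsilon> \<le> u \<Longrightarrow> R \<le> K * u powr (49/50) \<and>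
      C * exp (- ((K * u powr (49/50)) powr (3/4))) \<le> integral\<^sup>L lborel \<phi> * exp (- (u powr (1/2)))"
    and s: "M powr (\<tau> + \<epsilon>) \<le> real_of_int \<bar>s\<bar>"
  shows "norm (fourier (fM \<phi> \<theta> \<psi>1 \<psi>2 \<epsilon> M) (real_of_int s)) \<le>
    exp (- (\<bar>real_of_int s / M powr \<tau>\<bar> powr (1/2)))"
proof (rule norm_fourier_fM_le_uniform[OF i a I P])
  define u where "u = \<bar>real_of_int s / M powr \<tau>\<bar>"
  have u: "M powr \<epsilon> \<le> u"
    using s M by (simp add: u_def abs_divide powr_add le_divide_eq mult.commute)
  fix q assume "q \<in> dyadic_primes M"
  define \<xi> where "\<xi> = cM \<epsilon> M * \<psi>2 q * real_of_int s"
  have \<xi>: "K * u powr (49/50) \<le> \<bar>\<xi>\<bar>"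
    unfolding u_def \<xi>_def cM_def
    using \<psi> \<open>q \<in> _\<close> by (intro dilated_frequency_lower_bound[OF M \<epsilon> K _ s]) simp
  then have "R \<le> \<bar>\<xi>\<bar>" using U[OF u] by linarith
  then have bound: "norm (fourier (\<lambda>x. complex_of_real (\<phi> x)) \<xi>) \<le> C * exp (- (\<bar>\<xi>\<bar> powr (3/4)))"
    by (rule decay)
  then have "C \<ge> 0" by (smt (verit) exp_gt_zero mult_neg_pos norm_ge_zero)
  have "(K * u powr (49/50)) powr (3/4) \<le> \<bar>\<xi>\<bar> powr (3/4)"
    using \<xi> K by (intro powr_mono2) auto
  then have "C * exp (- (\<bar>\<xi>\<bar> powr (3/4))) \<le> C * exp (- ((K * u powr (49/50)) powr (3/4)))"
    using \<open>C \<ge> 0\<close> by (intro mult_left_mono) auto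
  then show "norm (fourier (\<lambda>x. complex_of_real (\<phi> x)) (cM \<epsilon> M * \<psi>2 q * real_of_int s))
      \<le> integral\<^sup>L lborel \<phi> * exp (- (u powr (1/2)))"
    using bound U[OF u] unfolding \<xi>_def by linarith
qed simp

lemma fourier_fM_at_0:
  assumes "integrable lborel \<phi>" "\<And>q. cM \<epsilon> M * \<psi>2 q > 0"
    and "integral\<^sup>L lborel \<phi> > 0" "dyadic_primes M \<noteq> {}"
  shows "fourier (fM \<phi> \<theta> \<psi>1 \<psi>2 \<epsilon> M) 0 = 1"
  using sum_dyadic_primes_pos[OF assms(4)] assms(3)
  by (simp add: fourier_fM fourier_gM_at_0[OF assms(1,2)] del: of_nat_sum)

lemma fourier_fM_eq_0:
  fixes s :: int
  assumes "integrable lborel \<phi>" "\<And>q. cM \<epsilon> M * \<psi>2 q > 0"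
    and "s \<noteq> 0" "real_of_int \<bar>s\<bar> < M"
  shows "fourier (fM \<phi> \<theta> \<psi>1 \<psi>2 \<epsilon> M) (real_of_int s) = 0"
proof -
  have "\<not> int q dvd s" if "q \<in> dyadic_primes M" for q
  proof
    assume "int q dvd s"
    then have "int q \<le> \<bar>s\<bar>" using assms(3) dvd_imp_le_int by force
    then show False using that assms(4) by (simp add: dyadic_primes_def)
  qed
  then show ?thesis by (simp add: fourier_fM fourier_gM_eq_0[OF assms(1,2)])
qed

lemma eventually_forall_ge_powr:
  fixes \<epsilon> :: real
  assumes "\<epsilon> > 0" "eventually P at_top"
  shows "eventually (\<lambda>M. \<forall>u\<ge>M powr \<epsilon>. P u) at_top"
proof (rule eventually_compose_filterlim[OF eventually_all_ge_at_top[OF assms(2)]])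
  show "filterlim (\<lambda>M::real. M powr \<epsilon>) at_top at_top" using assms(1) by real_asymp
qed

lemma eventually_decay_comparison:
  fixes K I C R \<epsilon> :: real
  assumes "K > 0" "I > 0" "\<epsilon> > 0"
  shows "eventually (\<lambda>M. \<forall>u\<ge>M powr \<epsilon>. R \<le> K * u powr (49/50) \<and>
      C * exp (- ((K * u powr (49/50)) powr (3/4))) \<le> I * exp (- (u powr (1/2)))) at_top"
proof (rule eventually_forall_ge_powr[OF assms(3)])
  have "eventually (\<lambda>u. R \<le> K * u powr (49/50)) at_top" using assms(1) by real_asymp
  then show "eventually (\<lambda>u. R \<le> K * u powr (49/50) \<and>
      C * exp (- ((K * u powr (49/50)) powr (3/4))) \<le> I * exp (- (u powr (1/2)))) at_top"
    using eventually_stretched_exp_le[OF assms(1,2)] by eventually_elim simp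
qed

lemma fourier_fM_estimates:
  fixes s :: int
  assumes i: "integrable lborel \<phi>" and nn: "\<And>x. \<phi> x \<ge> 0" and I: "integral\<^sup>L lborel \<phi> > 0"
    and decay: "\<And>\<xi>. R \<le> \<bar>\<xi>\<bar> \<Longrightarrow>
      norm (fourier (\<lambda>x. complex_of_real (\<phi> x)) \<xi>) \<le> C * exp (- (\<bar>\<xi>\<bar> powr (3/4)))"
    and \<psi>2: "\<And>q. \<psi>2 q > 0" and \<tau>2: "\<tau>2 \<ge> 2" and \<epsilon>: "0 < \<epsilon>" "\<epsilon> < 1" and K: "K > 0"
    and M: "M > 1" and P: "M / (4 * ln (4 * M)) \<le> real (card (dyadic_primes M))"
    and \<psi>: "\<forall>q\<in>dyadic_primes M. K * M powr (- (\<tau>2 + \<epsilon> / 100)) \<le> \<psi>2 q"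
    and U: "\<forall>u\<ge>M powr \<epsilon>. R \<le> K * u powr (49/50) \<and>
      C * exp (- ((K * u powr (49/50)) powr (3/4))) \<le> integral\<^sup>L lborel \<phi> * exp (- (u powr (1/2)))"
  shows "let F = fourier (fM \<phi> \<theta> \<psi>1 \<psi>2 \<epsilon> M) (real_of_int s) in
       (s = 0 \<longrightarrow> F = 1) \<and>
       (1 \<le> \<bar>s\<bar> \<and> real_of_int \<bar>s\<bar> < M \<longrightarrow> F = 0) \<and>
       (M \<le> real_of_int \<bar>s\<bar> \<and> real_of_int \<bar>s\<bar> \<le> M powr (\<tau>2 * (1 + \<epsilon> / 2)) \<longrightarrow>
          norm F \<le> 32 * (\<tau>2 * (1 + \<epsilon> / 2)) / \<epsilon> * M powr (-1 + \<epsilon>)) \<and>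
       (real_of_int \<bar>s\<bar> \<ge> M powr (\<tau>2 * (1 + \<epsilon> / 2)) \<longrightarrow>
          norm F \<le> exp (- (\<bar>real_of_int s / M powr \<tau>2\<bar> powr (1/2))))"
proof -
  let ?F = "fourier (fM \<phi> \<theta> \<psi>1 \<psi>2 \<epsilon> M) (real_of_int s)"
  have a: "cM \<epsilon> M * \<psi>2 q > 0" for q using M \<psi>2 by (simp add: cM_def)
  have "M / (4 * ln (4 * M)) > 0" using M by simp
  then have "real (card (dyadic_primes M)) > 0" using P by linarith
  then have P0: "dyadic_primes M \<noteq> {}" by auto
  have large: "M powr (\<tau>2 + \<epsilon>) \<le> M powr (\<tau>2 * (1 + \<epsilon> / 2))"
    using M \<tau>2 \<epsilon> by (intro powr_mono) (auto simp: algebra_simps)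
  show ?thesis unfolding Let_def
  proof (intro conjI impI)
    show "?F = 1" if "s = 0" using that fourier_fM_at_0[OF i a I P0] by simp
    show "?F = 0" if "1 \<le> \<bar>s\<bar> \<and> real_of_int \<bar>s\<bar> < M"
      using that by (intro fourier_fM_eq_0[OF i a]) auto
    show "norm ?F \<le> 32 * (\<tau>2 * (1 + \<epsilon> / 2)) / \<epsilon> * M powr (-1 + \<epsilon>)"
      if "M \<le> real_of_int \<bar>s\<bar> \<and> real_of_int \<bar>s\<bar> \<le> M powr (\<tau>2 * (1 + \<epsilon> / 2))"
      using that M \<epsilon> by (intro norm_fourier_fM_middle[OF i a nn I M P]) auto
    show "norm ?F \<le> exp (- (\<bar>real_of_int s / M powr \<tau>2\<bar> powr (1/2)))"
      if "real_of_int \<bar>s\<bar> \<ge> M powr (\<tau>2 * (1 + \<epsilon> / 2))"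
      using U by (intro norm_fourier_fM_large[OF i a I P0 M \<epsilon>(1) K \<psi> decay _ order.trans[OF large that]]) auto
  qed
qed

theorem lemma6:
  fixes \<theta> \<epsilon> \<tau>2 :: real and \<psi>1 \<psi>2 :: "nat \<Rightarrow> real" and \<phi> :: "real \<Rightarrow> real"
  assumes "0 \<le> \<theta>" and "\<theta> < 1"
    and "\<And>q. \<psi>1 q > 0" and "\<And>q. \<psi>2 q > 0"
    and "\<And>q. \<psi>2 q \<le> \<psi>1 q"
    and "antimono \<psi>2"
    and "((\<lambda>q. ln (\<psi>2 q) / ln (real q)) \<longlongrightarrow> - \<tau>2) at_top"
    and "\<tau>2 \<ge> 2"
    and "0 < \<epsilon>" and "\<epsilon> < 1"
    and "smooth_fun \<phi>"
    and "\<And>x. \<phi> x \<ge> 0"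
    and "\<exists>x. \<phi> x \<noteq> 0"
    and "\<And>x. \<bar>x\<bar> > 1/2 \<Longrightarrow> \<phi> x = 0"
    and "\<exists>C R. \<forall>\<xi>. \<bar>\<xi>\<bar> \<ge> R \<longrightarrow>
           norm (fourier (\<lambda>x. complex_of_real (\<phi> x)) \<xi>) \<le> C * exp (- (\<bar>\<xi>\<bar> powr (3/4)))"
  shows "\<exists>M0 C\<^sub>\<epsilon>. \<forall>M::real. M > 1 \<and> M \<ge> M0 \<longrightarrow> (\<forall>s::int.
     let F = fourier (fM \<phi> \<theta> \<psi>1 \<psi>2 \<epsilon> M) (real_of_int s) in
       (s = 0 \<longrightarrow> F = 1) \<and>
       (1 \<le> \<bar>s\<bar> \<and> real_of_int \<bar>s\<bar> < M \<longrightarrow> F = 0) \<and>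
       (M \<le> real_of_int \<bar>s\<bar> \<and> real_of_int \<bar>s\<bar> \<le> M powr (\<tau>2 * (1 + \<epsilon> / 2)) \<longrightarrow>
          norm F \<le> C\<^sub>\<epsilon> * M powr (-1 + \<epsilon>)) \<and>
       (real_of_int \<bar>s\<bar> \<ge> M powr (\<tau>2 * (1 + \<epsilon> / 2)) \<longrightarrow>
          norm F \<le> exp (- (\<bar>real_of_int s / M powr \<tau>2\<bar> powr (1/2)))))"
proof -
  have "continuous_on {-1/2..1/2} \<phi>" by (rule smooth_fun_imp_continuous_on[OF assms(11)])
  then have i: "integrable lborel \<phi>"
    using assms(14) by (intro integrable_lborel_vanishing_outside) auto
  obtain x0 where "\<phi> x0 \<noteq> 0" using assms(13) by blast
  then have I: "integral\<^sup>L lborel \<phi> > 0"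
    by (rule integral_lborel_pos[OF smooth_fun_imp_continuous_on[OF assms(11)] i assms(12)])
  obtain C R where decay: "\<And>\<xi>. R \<le> \<bar>\<xi>\<bar> \<Longrightarrow>
      norm (fourier (\<lambda>x. complex_of_real (\<phi> x)) \<xi>) \<le> C * exp (- (\<bar>\<xi>\<bar> powr (3/4)))"
    using assms(15) by blast
  define K where "K = 3 powr (- (\<tau>2 + \<epsilon> / 100))"
  have K: "K > 0" unfolding K_def by simp
  have "eventually (\<lambda>M. M > 1 \<and> M / (4 * ln (4 * M)) \<le> real (card (dyadic_primes M))
      \<and> (\<forall>q\<in>dyadic_primes M. K * M powr (- (\<tau>2 + \<epsilon> / 100)) \<le> \<psi>2 q)
      \<and> (\<forall>u\<ge>M powr \<epsilon>. R \<le> K * u powr (49/50) \<and> C * exp (- ((K * u powr (49/50)) powr (3/4)))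
           \<le> integral\<^sup>L lborel \<phi> * exp (- (u powr (1/2))))) at_top" (is "eventually ?good at_top")
    using assms(4,6-10) unfolding K_def
    by (intro eventually_conj eventually_gt_at_top eventually_card_dyadic_primes_ge
        eventually_dyadic_primes_lower_bound eventually_decay_comparison K[unfolded K_def] I) auto
  then obtain M0 where M0: "\<And>M. M \<ge> M0 \<Longrightarrow> ?good M" by (auto simp: eventually_at_top_linorder)
  show ?thesis
  proof (rule exI[of _ M0], rule exI[of _ "32 * (\<tau>2 * (1 + \<epsilon> / 2)) / \<epsilon>"],
      intro allI impI fourier_fM_estimates[OF i assms(12) I decay assms(4,8-10) K])
  qed (use M0 in blast)+
qed

end
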